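(* Let $n\geq 3$. The center of the ramified symmetric monoid $\mathcal{R}(\mathfrak{S}_n)$ is $Z(\mathcal{R}(\mathfrak{S}_n))=\{1,\;e_1e_2\cdots e_{n-1}\}$, i.e. the submonoid generated by the single idempotent $e_1e_2\cdots e_{n-1}$.
   Context: For $n\ge1$ let $\mathfrak{C}_n$ be the partition monoid: its elements are set partitions of $[2n]=\{1,\dots,2n\}$ (points $1,\dots,n$ on top, $n+1,\dots,2n$ on bottom), and the product $I*J$ is obtained by identifying the bottom point $n+i$ of $I$ with the top point $i$ of $J$, joining blocks transitively, and then deleting the identified middle points (formally, with $X=\{x_1,\dots,x_n\}$ disjoint from $[2n]$, $I*J=(I_X\vee J^X)\cap[2n]$, where $I_X$ replaces $n+i$ by $x_i$ in $I$, $J^X$ replaces $i$ by $x_i$ in $J$, and $\vee$ is the join of set partitions). For set partitions, $I\preceq J$ means every block of $J$ is a union of blocks of $I$. The symmetric group $\mathfrak{S}_n$ is the submonoid of $\mathfrak{C}_n$ of partitions whose blocks are of the form $\{i,n+j\}$; $s_i$ denotes the simple transposition and $1$ the identity $\{\{i,n+i\}\}$. For a submonoid $M\subseteq\mathfrak{C}_n$, the ramified monoid $\mathcal{R}(M)$ is the set of pairs $(I,J)$ of set partitions of $[2n]$ with $I\in M$ and $I\preceq J$, with product $(I,J)*(H,K)=(I*H,J*K)$. The group $\mathfrak{S}_n$ embeds via $w\mapsto(w,w)$. For $i\in[n-1]$, $e_i=(1,b_i)$ where $b_i$ is the set partition obtained from $1$ by merging the blocks $\{i,n+i\}$ and $\{i+1,n+i+1\}$.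 Thus $e_1\cdots e_{n-1}=(1,\{[2n]\})$. *)

theory Defs
  imports Main "HOL-Library.Disjoint_Sets"
begin

type_synonym spart = "nat set set"

definition pmon :: "nat \<Rightarrow> spart set" where
  "pmon n = {P. partition_on {1..2*n} P}"

definition blockrel :: "spart \<Rightarrow> (nat \<times> nat) set" where
  "blockrel P = {(a,b). \<exists>B\<in>P. a \<in> B \<and> b \<in> B}"

definition pjoin :: "spart \<Rightarrow> spart \<Rightarrow> spart" where
  "pjoin P Q = (\<Union>P \<union> \<Union>Q) // ((blockrel P \<union> blockrel Q)\<^sup>+)"

definition prestrict :: "nat set \<Rightarrow> spart \<Rightarrow> spart" where
  "prestrict A P = {B \<inter> A | B. B \<in> P \<and> B \<inter> A \<noteq> {}}"

definition cmap :: "(nat \<Rightarrow> nat) \<Rightarrow> spart \<Rightarrow> spart" where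
  "cmap f P = (\<lambda>B. f ` B) ` P"

text \<open>Middle points x_i are encoded as 2n+i.  I_X replaces n+i by x_i;
  J^X replaces i by x_i.\<close>
definition xbot :: "nat \<Rightarrow> nat \<Rightarrow> nat" where
  "xbot n k = (if n < k \<and> k \<le> 2*n then k + n else k)"

definition xtop :: "nat \<Rightarrow> nat \<Rightarrow> nat" where
  "xtop n k = (if 1 \<le> k \<and> k \<le> n then k + 2*n else k)"

definition pmult :: "nat \<Rightarrow> spart \<Rightarrow> spart \<Rightarrow> spart" where
  "pmult n I J = prestrict {1..2*n} (pjoin (cmap (xbot n) I) (cmap (xtop n) J))"

definition refines :: "spart \<Rightarrow> spart \<Rightarrow> bool" where
  "refines I J \<longleftrightarrow> (\<forall>B\<in>J. \<exists>S\<subseteq>I. B = \<Union>S)"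

definition symgrp :: "nat \<Rightarrow> spart set" where
  "symgrp n = {P. partition_on {1..2*n} P \<and>
     (\<forall>B\<in>P. \<exists>i\<in>{1..n}. \<exists>j\<in>{1..n}. B = {i, n+j})}"

definition id_part :: "nat \<Rightarrow> spart" where
  "id_part n = {{i, n+i} | i. i \<in> {1..n}}"

definition ramified :: "nat \<Rightarrow> spart set \<Rightarrow> (spart \<times> spart) set" where
  "ramified n M = {(I,J). I \<in> M \<and> partition_on {1..2*n} J \<and> refines I J}"

definition rmult :: "nat \<Rightarrow> spart \<times> spart \<Rightarrow> spart \<times> spart \<Rightarrow> spart \<times> spart" where
  "rmult n x y = (pmult n (fst x) (fst y), pmult n (snd x) (snd y))"

definition rone :: "nat \<Rightarrow> spart \<times> spart" where
  "rone n = (id_part n, id_part n)"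

definition center :: "nat \<Rightarrow> (spart \<times> spart) set \<Rightarrow> (spart \<times> spart) set" where
  "center n R = {z \<in> R. \<forall>x\<in>R. rmult n z x = rmult n x z}"

definition bpart :: "nat \<Rightarrow> nat \<Rightarrow> spart" where
  "bpart n i = (id_part n - {{i, n+i}, {i+1, n+i+1}}) \<union> {{i, n+i, i+1, n+i+1}}"

definition egen :: "nat \<Rightarrow> nat \<Rightarrow> spart \<times> spart" where
  "egen n i = (id_part n, bpart n i)"

definition eprod :: "nat \<Rightarrow> spart \<times> spart" where
  "eprod n = foldr (\<lambda>i acc. rmult n (egen n i) acc) [1..<n] (rone n)"

end

(*
  A set partition is handled through its block relation, an equivalence on [2n].
  The blocks of I * J are the connected components, restricted to [2n], of the
  graph obtained by stacking I over J; such products are computed by exhibiting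
  paths (lower bound) and a labelling of the points that every edge respects
  (upper bound).

  Multiplying by the diagram of a permutation only relabels one row, so a central
  element (I, J) commutes with every transposition diagram and both block
  relations are invariant under relabelling both rows by a transposition.  For
  I in S_n with n >= 3 this forces I = 1, since a permutation commuting with all
  transpositions is trivial.  Then J is coarser than 1, hence given by an
  equivalence on the columns {1..n} that is invariant under all transpositions,
  so it is trivial or total: J = 1 or J = {[2n]}.  Conversely, (1, {[2n]}) is
  central because the one-block partition absorbs, from either side, every
  partition coarser than a permutation, and e_1 ... e_(n-1) = (1, {[2n]}) because multiplying partitions
  coarser than 1 joins their column equivalences.
*)
theory Submission
  imports Defs "HOL-Combinatorics.Transposition"
begin

section \<open>Set partitions as equivalence relations\<close>

lemma blockrelI: "B \<in> P \<Longrightarrow> a \<in> B \<Longrightarrow> b \<in> B \<Longrightarrow> (a, b) \<in> blockrel P"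
  unfolding blockrel_def by auto

lemma blockrel_eq: "blockrel P = {(x, y). \<exists>p \<in> P. x \<in> p \<and> y \<in> p}"
  by (simp add: blockrel_def)

lemma equiv_blockrel: "partition_on A P \<Longrightarrow> equiv A (blockrel P)"
  unfolding blockrel_eq by (rule equiv_partition_on)

lemma blockrel_subset: "partition_on A P \<Longrightarrow> blockrel P \<subseteq> A \<times> A"
  unfolding blockrel_def by (auto dest: partition_onD1)

lemma quotient_blockrel: "partition_on A P \<Longrightarrow> A // blockrel P = P"
  unfolding blockrel_eq by (rule partition_on_eq_quotient)

lemma blockrel_quotient:
  assumes "equiv A r"
  shows "blockrel (A // r) = r"
proof safe
  fix a b assume "(a, b) \<in> blockrel (A // r)"
  then obtain X where "X \<in> A // r" "a \<in> X" "b \<in> X"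
    unfolding blockrel_def by auto
  then show "(a, b) \<in> r"
    using quotient_eq_iff[OF assms] by blast
next
  fix a b assume ab: "(a, b) \<in> r"
  then have "a \<in> A" "r `` {a} \<in> A // r"
    using assms by (auto elim: equivE intro: quotientI)
  moreover have "a \<in> r `` {a}" "b \<in> r `` {a}"
    using ab assms \<open>a \<in> A\<close> by (auto elim!: equivE dest: refl_onD)
  ultimately show "(a, b) \<in> blockrel (A // r)"
    by (auto intro: blockrelI)
qed

lemma partition_eqI:
  assumes "partition_on A P" "partition_on A Q" "blockrel P = blockrel Q"
  shows "P = Q"
  by (metis assms quotient_blockrel)

lemma partition_eq_full:
  assumes "partition_on A P" "blockrel P = A \<times> A" "A \<noteq> {}"
  shows "P = {A}"
proof -
  have "A // (A \<times> A) = {A}"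
    using assms(3) unfolding quotient_def by auto
  then show ?thesis
    using quotient_blockrel[OF assms(1)] assms(2) by simp
qed

lemma partition_subset_eq:
  assumes P: "partition_on A P" and Q: "partition_on A Q" and "P \<subseteq> Q"
  shows "P = Q"
proof
  show "Q \<subseteq> P"
  proof
    fix C assume C: "C \<in> Q"
    then obtain x where "x \<in> C"
      using partition_onD3[OF Q] by fastforce
    moreover from this C have "x \<in> A"
      using partition_onD1[OF Q] by auto
    then obtain B where B: "B \<in> P" "x \<in> B"
      using partition_onD1[OF P] by auto
    ultimately have "B = C"
      using C \<open>P \<subseteq> Q\<close> disjointD[OF partition_onD2[OF Q], of B C] by blast
    then show "C \<in> P"
      using B by simp
  qed
qed (use assms in simp)

lemma Union_partition: "partition_on A P \<Longrightarrow> \<Union>P = A"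
  by (rule partition_onD1[symmetric])

lemma Union_eq_blockrel_diag: "\<Union>P = {x. (x, x) \<in> blockrel P}"
  unfolding blockrel_def by auto

lemma blockrel_subset_refines:
  assumes "refines I K" "partition_on A I" "partition_on A K"
  shows "blockrel I \<subseteq> blockrel K"
proof (rule subrelI)
  fix x y assume "(x, y) \<in> blockrel I"
  then obtain C where C: "C \<in> I" "x \<in> C" "y \<in> C"
    unfolding blockrel_def by auto
  then have "x \<in> A"
    using assms(2) by (auto dest: partition_onD1)
  then obtain B where B: "B \<in> K" "x \<in> B"
    using assms(3) by (auto dest: partition_onD1)
  then obtain S where S: "S \<subseteq> I" "B = \<Union>S"
    using assms(1) unfolding refines_def by auto
  then obtain C' where "C' \<in> S" "x \<in> C'"
    using B by auto
  moreover have "C' \<in> I"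
    using S \<open>C' \<in> S\<close> by auto
  ultimately have "C' = C"
    using C disjointD[OF partition_onD2[OF assms(2)], of C' C] by blast
  then show "(x, y) \<in> blockrel K"
    using B S C \<open>C' \<in> S\<close> by (auto intro: blockrelI)
qed

lemma equiv_Restr: "equiv U r \<Longrightarrow> A \<subseteq> U \<Longrightarrow> equiv A (r \<inter> A \<times> A)"
  unfolding equiv_def refl_on_def sym_def trans_def by blast

lemma equiv_full: "equiv A (A \<times> A)"
  by (intro equivI) (auto simp: refl_on_def sym_def trans_def)

section \<open>The product as a connectivity relation\<close>

lemma prestrict_quotient:
  assumes "equiv U r" "A \<subseteq> U"
  shows "prestrict A (U // r) = A // (r \<inter> A \<times> A)"
proof (rule set_eqI, rule iffI)
  fix X assume "X \<in> prestrict A (U // r)"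
  then obtain B a where B: "X = B \<inter> A" "B \<in> U // r" "a \<in> B" "a \<in> A"
    unfolding prestrict_def by auto
  then have "B = r `` {a}"
    using assms(1) by (metis Image_singleton_iff equiv_class_eq_iff quotientE)
  then have "X = (r \<inter> A \<times> A) `` {a}"
    using B by auto
  then show "X \<in> A // (r \<inter> A \<times> A)"
    using B by (auto intro: quotientI)
next
  fix X assume "X \<in> A // (r \<inter> A \<times> A)"
  then obtain a where a: "a \<in> A" "X = (r \<inter> A \<times> A) `` {a}"
    by (auto elim: quotientE)
  have "a \<in> U"
    using a assms(2) by auto
  then have "r `` {a} \<in> U // r" "a \<in> r `` {a}"
    using equiv_class_self[OF assms(1)] by (auto intro: quotientI)
  moreover have "X = r `` {a} \<inter> A"
    using a by auto
  ultimately show "X \<in> prestrict A (U // r)"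
    unfolding prestrict_def using a(1) by blast
qed

lemma equiv_join: "equiv (\<Union>P \<union> \<Union>Q) ((blockrel P \<union> blockrel Q)\<^sup>+)"
proof (rule equivI)
  let ?R = "blockrel P \<union> blockrel Q"
  have "?R \<subseteq> (\<Union>P \<union> \<Union>Q) \<times> (\<Union>P \<union> \<Union>Q)"
    unfolding blockrel_def by auto
  then show "?R\<^sup>+ \<subseteq> (\<Union>P \<union> \<Union>Q) \<times> (\<Union>P \<union> \<Union>Q)"
    by (rule trancl_subset_Sigma)
  show "refl_on (\<Union>P \<union> \<Union>Q) (?R\<^sup>+)"
    by (rule refl_onI) (auto simp: blockrel_def)
  show "sym (?R\<^sup>+)"
    by (rule sym_trancl) (auto simp: blockrel_def sym_def)
qed (rule trans_trancl)

lemma blockrel_cmap: "blockrel (cmap f P) = map_prod f f ` blockrel P"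
  unfolding blockrel_def cmap_def by fastforce

lemma xbot_top [simp]: "k \<le> n \<Longrightarrow> xbot n k = k"
  and xbot_bot [simp]: "1 \<le> i \<Longrightarrow> i \<le> n \<Longrightarrow> xbot n (n + i) = 2 * n + i"
  and xtop_top [simp]: "1 \<le> i \<Longrightarrow> i \<le> n \<Longrightarrow> xtop n i = 2 * n + i"
  and xtop_bot [simp]: "n < k \<Longrightarrow> xtop n k = k"
  by (auto simp: xbot_def xtop_def)

definition diagram_edges :: "nat \<Rightarrow> (nat \<times> nat) set \<Rightarrow> (nat \<times> nat) set \<Rightarrow> (nat \<times> nat) set" where
  "diagram_edges n E F = map_prod (xbot n) (xbot n) ` E \<union> map_prod (xtop n) (xtop n) ` F"

definition compose_rel :: "nat \<Rightarrow> (nat \<times> nat) set \<Rightarrow> (nat \<times> nat) set \<Rightarrow> (nat \<times> nat) set" where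
  "compose_rel n E F = (diagram_edges n E F)\<^sup>+ \<inter> {1..2*n} \<times> {1..2*n}"

lemma diagram_edges_botI: "(a, b) \<in> E \<Longrightarrow> (xbot n a, xbot n b) \<in> diagram_edges n E F"
  and diagram_edges_topI: "(a, b) \<in> F \<Longrightarrow> (xtop n a, xtop n b) \<in> diagram_edges n E F"
  unfolding diagram_edges_def by force+

lemma sym_diagram_edges: "sym E \<Longrightarrow> sym F \<Longrightarrow> sym (diagram_edges n E F)"
  unfolding diagram_edges_def sym_def by blast

lemma pmult_eq_quotient:
  assumes "\<Union>I = {1..2*n}" "\<Union>J = {1..2*n}"
  shows "pmult n I J = {1..2*n} // compose_rel n (blockrel I) (blockrel J)"
    and "equiv {1..2*n} (compose_rel n (blockrel I) (blockrel J))"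
proof -
  let ?P = "cmap (xbot n) I" and ?Q = "cmap (xtop n) J"
  have "x \<in> xbot n ` \<Union>I \<union> xtop n ` \<Union>J" if "x \<in> {1..2*n}" for x
  proof (cases "x \<le> n")
    case True
    then have "x = xbot n x" by simp
    then show ?thesis using that assms(1) by blast
  next
    case False
    then have "x = xtop n x" by simp
    then show ?thesis using that assms(2) by blast
  qed
  then have sub: "{1..2*n} \<subseteq> \<Union>?P \<union> \<Union>?Q"
    unfolding cmap_def image_Union[symmetric] by blast
  have rel: "(blockrel ?P \<union> blockrel ?Q)\<^sup>+ \<inter> {1..2*n} \<times> {1..2*n} = compose_rel n (blockrel I) (blockrel J)"
    unfolding compose_rel_def diagram_edges_def blockrel_cmap ..
  show "pmult n I J = {1..2*n} // compose_rel n (blockrel I) (blockrel J)"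
    unfolding pmult_def pjoin_def prestrict_quotient[OF equiv_join sub] rel ..
  show "equiv {1..2*n} (compose_rel n (blockrel I) (blockrel J))"
    using equiv_Restr[OF equiv_join sub] unfolding rel .
qed

lemma blockrel_pmult:
  assumes "\<Union>I = {1..2*n}" "\<Union>J = {1..2*n}"
  shows "blockrel (pmult n I J) = compose_rel n (blockrel I) (blockrel J)"
  unfolding pmult_eq_quotient[OF assms] by (rule blockrel_quotient[OF pmult_eq_quotient(2)[OF assms]])

lemma partition_pmult:
  assumes "\<Union>I = {1..2*n}" "\<Union>J = {1..2*n}"
  shows "partition_on {1..2*n} (pmult n I J)"
  unfolding pmult_eq_quotient[OF assms] by (rule partition_on_quotient[OF pmult_eq_quotient(2)[OF assms]])

lemma compose_rel_subset_inv_image: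
  assumes "trans Q"
    and "\<And>a b. (a, b) \<in> E \<Longrightarrow> (g (xbot n a), g (xbot n b)) \<in> Q"
    and "\<And>a b. (a, b) \<in> F \<Longrightarrow> (g (xtop n a), g (xtop n b)) \<in> Q"
  shows "compose_rel n E F \<subseteq> inv_image Q g"
proof (rule subrelI)
  fix x y assume "(x, y) \<in> compose_rel n E F"
  then have "(x, y) \<in> (diagram_edges n E F)\<^sup>+"
    unfolding compose_rel_def by simp
  moreover have "diagram_edges n E F \<subseteq> inv_image Q g"
    unfolding diagram_edges_def by (auto intro: assms(2,3))
  ultimately have "(x, y) \<in> (inv_image Q g)\<^sup>+"
    by (rule trancl_mono)
  then show "(x, y) \<in> inv_image Q g"
    by (simp only: trancl_id[OF trans_inv_image[OF assms(1)]])
qed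

lemma compose_relI:
  assumes "refl_on {1..2*n} E" "refl_on {1..2*n} F"
    and "x \<in> {1..2*n}" "y \<in> {1..2*n}" "(x, y) \<in> (diagram_edges n E F)\<^sup>*"
  shows "(x, y) \<in> compose_rel n E F"
proof -
  have "(x, x) \<in> diagram_edges n E F"
  proof (cases "x \<le> n")
    case True
    then show ?thesis
      using diagram_edges_botI[of x x E n F] refl_onD[OF assms(1,3)] by simp
  next
    case False
    then show ?thesis
      using diagram_edges_topI[of x x F n E] refl_onD[OF assms(2,3)] by simp
  qed
  then have "(x, y) \<in> (diagram_edges n E F)\<^sup>+"
    using assms(5) by (rule rtrancl_into_trancl2)
  then show ?thesis
    unfolding compose_rel_def using assms(3,4) by simp
qed

lemma compose_rel_via_paths:
  assumes "equiv {1..2*n} E" "equiv {1..2*n} F"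
    and "x \<in> {1..2*n}" "y \<in> {1..2*n}"
    and "(x, u) \<in> (diagram_edges n E F)\<^sup>*" "(y, v) \<in> (diagram_edges n E F)\<^sup>*"
    and "(u, v) \<in> (diagram_edges n E F)\<^sup>*"
  shows "(x, y) \<in> compose_rel n E F"
proof (rule compose_relI)
  show "refl_on {1..2*n} E" "refl_on {1..2*n} F"
    using assms(1,2) by (auto elim: equivE)
  have "sym ((diagram_edges n E F)\<^sup>*)"
    using assms(1,2) by (intro sym_rtrancl sym_diagram_edges) (auto elim: equivE)
  then have "(v, y) \<in> (diagram_edges n E F)\<^sup>*"
    using assms(6) by (rule symD)
  then show "(x, y) \<in> (diagram_edges n E F)\<^sup>*"
    using assms(5,7) by (meson rtrancl_trans)
qed (use assms(3,4) in auto)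

section \<open>Products with permutation diagrams\<close>

text \<open>Transpositions and the identity are the only permutations needed; restricting to
  involutions keeps \<open>\<sigma>\<^sup>-\<^sup>1 = \<sigma>\<close> out of the relabelling formulas.\<close>

definition invol :: "nat \<Rightarrow> (nat \<Rightarrow> nat) \<Rightarrow> bool" where
  "invol n \<sigma> \<longleftrightarrow> (\<forall>i\<in>{1..n}. \<sigma> i \<in> {1..n} \<and> \<sigma> (\<sigma> i) = i)"

definition perm_diagram :: "nat \<Rightarrow> (nat \<Rightarrow> nat) \<Rightarrow> spart" where
  "perm_diagram n \<sigma> = {{i, n + \<sigma> i} | i. i \<in> {1..n}}"

definition relabel_bot :: "nat \<Rightarrow> (nat \<Rightarrow> nat) \<Rightarrow> nat \<Rightarrow> nat" where
  "relabel_bot n \<sigma> x = (if n < x then n + \<sigma> (x - n) else x)"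

definition relabel_top :: "nat \<Rightarrow> (nat \<Rightarrow> nat) \<Rightarrow> nat \<Rightarrow> nat" where
  "relabel_top n \<sigma> x = (if x \<le> n then \<sigma> x else x)"

lemma involD: "invol n \<sigma> \<Longrightarrow> i \<in> {1..n} \<Longrightarrow> \<sigma> i \<in> {1..n} \<and> \<sigma> (\<sigma> i) = i"
  unfolding invol_def by blast

lemma invol_id: "invol n id"
  unfolding invol_def by simp

lemma invol_transpose: "a \<in> {1..n} \<Longrightarrow> b \<in> {1..n} \<Longrightarrow> invol n (transpose a b)"
  unfolding invol_def transpose_def by auto

lemma perm_diagram_id: "perm_diagram n id = id_part n"
  unfolding perm_diagram_def id_part_def by simp

lemma blockrel_perm_diagramE:
  assumes "(a, b) \<in> blockrel (perm_diagram n \<sigma>)"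
  obtains i where "i \<in> {1..n}" "a \<in> {i, n + \<sigma> i}" "b \<in> {i, n + \<sigma> i}"
  using assms unfolding blockrel_def perm_diagram_def by auto

lemma perm_diagram_edge:
  "i \<in> {1..n} \<Longrightarrow> a \<in> {i, n + \<sigma> i} \<Longrightarrow> b \<in> {i, n + \<sigma> i} \<Longrightarrow> (a, b) \<in> blockrel (perm_diagram n \<sigma>)"
  unfolding perm_diagram_def by (rule blockrelI) auto

lemma partition_perm_diagram:
  assumes "invol n \<sigma>"
  shows "partition_on {1..2*n} (perm_diagram n \<sigma>)"
proof (rule partition_onI)
  have "x \<in> \<Union>(perm_diagram n \<sigma>)" if "x \<in> {1..2*n}" for x
  proof (cases "x \<le> n")
    case True
    then show ?thesis
      using that unfolding perm_diagram_def by auto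
  next
    case False
    then have j: "x - n \<in> {1..n}"
      using that by auto
    then have "x = n + \<sigma> (\<sigma> (x - n))"
      using False involD[OF assms j] by auto
    then show ?thesis
      using involD[OF assms j] unfolding perm_diagram_def by blast
  qed
  moreover have "B \<subseteq> {1..2*n}" if "B \<in> perm_diagram n \<sigma>" for B
    using that involD[OF assms] unfolding perm_diagram_def by force
  ultimately show "\<Union>(perm_diagram n \<sigma>) = {1..2*n}"
    by blast
  show "{} \<notin> perm_diagram n \<sigma>"
    unfolding perm_diagram_def by auto
  fix p q assume "p \<in> perm_diagram n \<sigma>" "q \<in> perm_diagram n \<sigma>" "p \<noteq> q"
  then obtain i j where ij: "i \<in> {1..n}" "j \<in> {1..n}" "p = {i, n + \<sigma> i}" "q = {j, n + \<sigma> j}" "i \<noteq> j"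
    unfolding perm_diagram_def by auto
  moreover have "\<sigma> i \<noteq> \<sigma> j"
    using involD[OF assms ij(1)] involD[OF assms ij(2)] ij(5) by metis
  ultimately show "disjnt p q"
    using involD[OF assms ij(1)] involD[OF assms ij(2)] unfolding disjnt_def by auto
qed

lemma id_part_partition: "partition_on {1..2*n} (id_part n)"
  using partition_perm_diagram[OF invol_id] by (simp add: perm_diagram_id)

lemma path_to_relabel_bot:
  assumes \<sigma>: "invol n \<sigma>" and x: "x \<in> {1..2*n}"
  shows "(x, xbot n (relabel_bot n \<sigma> x)) \<in> (diagram_edges n E (blockrel (perm_diagram n \<sigma>)))\<^sup>*"
proof (cases "x \<le> n")
  case True
  then show ?thesis by (simp add: relabel_bot_def)
next
  case False
  define j where "j = x - n"
  have j: "j \<in> {1..n}"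
    using x False unfolding j_def by auto
  then have "x = n + \<sigma> (\<sigma> j)"
    using False involD[OF \<sigma> j] unfolding j_def by auto
  then have "(x, \<sigma> j) \<in> blockrel (perm_diagram n \<sigma>)"
    using involD[OF \<sigma> j] by (intro perm_diagram_edge[of "\<sigma> j"]) auto
  then have "(xtop n x, xtop n (\<sigma> j)) \<in> diagram_edges n E (blockrel (perm_diagram n \<sigma>))"
    by (rule diagram_edges_topI)
  moreover have "xtop n x = x" "xtop n (\<sigma> j) = xbot n (relabel_bot n \<sigma> x)"
    using False j involD[OF \<sigma> j] unfolding j_def relabel_bot_def by auto
  ultimately show ?thesis by auto
qed

lemma compose_rel_perm_right:
  assumes E: "equiv {1..2*n} E" and \<sigma>: "invol n \<sigma>"
  shows "compose_rel n E (blockrel (perm_diagram n \<sigma>))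
    = inv_image E (relabel_bot n \<sigma>) \<inter> {1..2*n} \<times> {1..2*n}"
proof
  let ?F = "blockrel (perm_diagram n \<sigma>)"
  \<comment> \<open>\<open>g\<close> sends the middle point \<open>x\<^sub>i\<close> to the bottom point \<open>n + i\<close>.\<close>
  define g where "g u = (if u \<le> 2*n then relabel_bot n \<sigma> u else u - n)" for u
  have g_bot: "g (xbot n a) = a" if "a \<in> {1..2*n}" for a
    using that unfolding g_def xbot_def relabel_bot_def by auto
  have g_top: "g (xtop n a) = n + i" if "i \<in> {1..n}" "a \<in> {i, n + \<sigma> i}" for i a
    using that involD[OF \<sigma> that(1)] unfolding g_def xtop_def relabel_bot_def by auto
  have "compose_rel n E ?F \<subseteq> inv_image E g"
  proof (rule compose_rel_subset_inv_image)
    show "trans E" using E by (rule equivE)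
    show "(g (xbot n a), g (xbot n b)) \<in> E" if "(a, b) \<in> E" for a b
      using that E g_bot by (auto elim!: equivE)
    show "(g (xtop n a), g (xtop n b)) \<in> E" if "(a, b) \<in> ?F" for a b
      using that
    proof (rule blockrel_perm_diagramE)
      fix i assume i: "i \<in> {1..n}" "a \<in> {i, n + \<sigma> i}" "b \<in> {i, n + \<sigma> i}"
      have "(n + i, n + i) \<in> E"
        using E i(1) by (auto elim!: equivE simp: refl_on_def)
      then show ?thesis
        using g_top[OF i(1,2)] g_top[OF i(1,3)] by simp
    qed
  qed
  moreover have "g x = relabel_bot n \<sigma> x" if "x \<le> 2*n" for x
    using that unfolding g_def by simp
  ultimately show "compose_rel n E ?F \<subseteq> inv_image E (relabel_bot n \<sigma>) \<inter> {1..2*n} \<times> {1..2*n}"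
    unfolding compose_rel_def by auto
  show "inv_image E (relabel_bot n \<sigma>) \<inter> {1..2*n} \<times> {1..2*n} \<subseteq> compose_rel n E ?F"
  proof (rule subrelI)
    fix x y assume "(x, y) \<in> inv_image E (relabel_bot n \<sigma>) \<inter> {1..2*n} \<times> {1..2*n}"
    then have xy: "x \<in> {1..2*n}" "y \<in> {1..2*n}" "(relabel_bot n \<sigma> x, relabel_bot n \<sigma> y) \<in> E"
      by auto
    show "(x, y) \<in> compose_rel n E ?F"
      using E equiv_blockrel[OF partition_perm_diagram[OF \<sigma>]] xy(1,2)
        path_to_relabel_bot[OF \<sigma> xy(1)] path_to_relabel_bot[OF \<sigma> xy(2)]
      by (rule compose_rel_via_paths) (use diagram_edges_botI[OF xy(3)] in blast)
  qed
qed

lemma path_to_relabel_top: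
  assumes \<sigma>: "invol n \<sigma>" and x: "x \<in> {1..2*n}"
  shows "(x, xtop n (relabel_top n \<sigma> x)) \<in> (diagram_edges n (blockrel (perm_diagram n \<sigma>)) E)\<^sup>*"
proof (cases "x \<le> n")
  case True
  then have "(xbot n x, xbot n (n + \<sigma> x)) \<in> diagram_edges n (blockrel (perm_diagram n \<sigma>)) E"
    using x by (intro diagram_edges_botI perm_diagram_edge) auto
  moreover have "xbot n x = x" "xbot n (n + \<sigma> x) = xtop n (relabel_top n \<sigma> x)"
    using True x involD[OF \<sigma>, of x] unfolding relabel_top_def by auto
  ultimately show ?thesis by auto
next
  case False
  then show ?thesis by (simp add: relabel_top_def)
qed

lemma compose_rel_perm_left:
  assumes E: "equiv {1..2*n} E" and \<sigma>: "invol n \<sigma>"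
  shows "compose_rel n (blockrel (perm_diagram n \<sigma>)) E
    = inv_image E (relabel_top n \<sigma>) \<inter> {1..2*n} \<times> {1..2*n}"
proof
  let ?F = "blockrel (perm_diagram n \<sigma>)"
  \<comment> \<open>\<open>g\<close> sends the middle point \<open>x\<^sub>i\<close> to the top point \<open>i\<close>.\<close>
  define g where "g u = (if u \<le> 2*n then relabel_top n \<sigma> u else u - 2*n)" for u
  have g_top: "g (xtop n a) = a" if "a \<in> {1..2*n}" for a
    using that unfolding g_def xtop_def relabel_top_def by auto
  have g_bot: "g (xbot n a) = \<sigma> i" if "i \<in> {1..n}" "a \<in> {i, n + \<sigma> i}" for i a
    using that involD[OF \<sigma> that(1)] unfolding g_def xbot_def relabel_top_def by auto
  have "compose_rel n ?F E \<subseteq> inv_image E g"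
  proof (rule compose_rel_subset_inv_image)
    show "trans E" using E by (rule equivE)
    show "(g (xtop n a), g (xtop n b)) \<in> E" if "(a, b) \<in> E" for a b
      using that E g_top by (auto elim!: equivE)
    show "(g (xbot n a), g (xbot n b)) \<in> E" if "(a, b) \<in> ?F" for a b
      using that
    proof (rule blockrel_perm_diagramE)
      fix i assume i: "i \<in> {1..n}" "a \<in> {i, n + \<sigma> i}" "b \<in> {i, n + \<sigma> i}"
      have "(\<sigma> i, \<sigma> i) \<in> E"
        using E involD[OF \<sigma> i(1)] by (auto elim!: equivE simp: refl_on_def)
      then show ?thesis
        using g_bot[OF i(1,2)] g_bot[OF i(1,3)] by simp
    qed
  qed
  moreover have "g x = relabel_top n \<sigma> x" if "x \<le> 2*n" for x
    using that unfolding g_def by simp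
  ultimately show "compose_rel n ?F E \<subseteq> inv_image E (relabel_top n \<sigma>) \<inter> {1..2*n} \<times> {1..2*n}"
    unfolding compose_rel_def by auto
  show "inv_image E (relabel_top n \<sigma>) \<inter> {1..2*n} \<times> {1..2*n} \<subseteq> compose_rel n ?F E"
  proof (rule subrelI)
    fix x y assume "(x, y) \<in> inv_image E (relabel_top n \<sigma>) \<inter> {1..2*n} \<times> {1..2*n}"
    then have xy: "x \<in> {1..2*n}" "y \<in> {1..2*n}" "(relabel_top n \<sigma> x, relabel_top n \<sigma> y) \<in> E"
      by auto
    show "(x, y) \<in> compose_rel n ?F E"
      using equiv_blockrel[OF partition_perm_diagram[OF \<sigma>]] E xy(1,2)
        path_to_relabel_top[OF \<sigma> xy(1)] path_to_relabel_top[OF \<sigma> xy(2)]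
      by (rule compose_rel_via_paths) (use diagram_edges_topI[OF xy(3)] in blast)
  qed
qed

lemma blockrel_pmult_perm_right:
  assumes "partition_on {1..2*n} P" "invol n \<sigma>"
  shows "blockrel (pmult n P (perm_diagram n \<sigma>))
    = inv_image (blockrel P) (relabel_bot n \<sigma>) \<inter> {1..2*n} \<times> {1..2*n}"
  unfolding blockrel_pmult[OF Union_partition[OF assms(1)] Union_partition[OF partition_perm_diagram[OF assms(2)]]]
  by (rule compose_rel_perm_right[OF equiv_blockrel[OF assms(1)] assms(2)])

lemma blockrel_pmult_perm_left:
  assumes "partition_on {1..2*n} P" "invol n \<sigma>"
  shows "blockrel (pmult n (perm_diagram n \<sigma>) P)
    = inv_image (blockrel P) (relabel_top n \<sigma>) \<inter> {1..2*n} \<times> {1..2*n}"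
  unfolding blockrel_pmult[OF Union_partition[OF partition_perm_diagram[OF assms(2)]] Union_partition[OF assms(1)]]
  by (rule compose_rel_perm_left[OF equiv_blockrel[OF assms(1)] assms(2)])

lemma pmult_id_right:
  assumes "partition_on {1..2*n} P"
  shows "pmult n P (id_part n) = P"
proof (rule partition_eqI)
  have "relabel_bot n id = id"
    by (auto simp: relabel_bot_def)
  then show "blockrel (pmult n P (id_part n)) = blockrel P"
    using blockrel_pmult_perm_right[OF assms invol_id] equiv_blockrel[OF assms]
    by (auto simp: perm_diagram_id elim: equivE)
qed (use assms partition_pmult[OF Union_partition Union_partition] id_part_partition in auto)

lemma pmult_id_left:
  assumes "partition_on {1..2*n} P"
  shows "pmult n (id_part n) P = P"
proof (rule partition_eqI)
  have "relabel_top n id = id"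
    by (auto simp: relabel_top_def)
  then show "blockrel (pmult n (id_part n) P) = blockrel P"
    using blockrel_pmult_perm_left[OF assms invol_id] equiv_blockrel[OF assms]
    by (auto simp: perm_diagram_id elim: equivE)
qed (use assms partition_pmult[OF Union_partition Union_partition] id_part_partition in auto)

definition conj_act :: "nat \<Rightarrow> (nat \<Rightarrow> nat) \<Rightarrow> nat \<Rightarrow> nat" where
  "conj_act n \<sigma> x = (if x \<le> n then \<sigma> x else n + \<sigma> (x - n))"

lemma conj_act_top [simp]: "i \<le> n \<Longrightarrow> conj_act n \<sigma> i = \<sigma> i"
  and conj_act_bot [simp]: "1 \<le> j \<Longrightarrow> conj_act n \<sigma> (n + j) = n + \<sigma> j"
  by (auto simp: conj_act_def)

lemma commute_perm_diagram_invariant: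
  assumes P: "partition_on {1..2*n} P" and \<sigma>: "invol n \<sigma>"
    and comm: "pmult n P (perm_diagram n \<sigma>) = pmult n (perm_diagram n \<sigma>) P"
    and xy: "(x, y) \<in> blockrel P"
  shows "(conj_act n \<sigma> x, conj_act n \<sigma> y) \<in> blockrel P"
proof -
  have relabel_bot_invol: "relabel_bot n \<sigma> z \<in> {1..2*n} \<and> relabel_bot n \<sigma> (relabel_bot n \<sigma> z) = z"
    if "z \<in> {1..2*n}" for z
  proof (cases "n < z")
    case True
    then have "z - n \<in> {1..n}"
      using that by auto
    then show ?thesis
      using True involD[OF \<sigma> \<open>z - n \<in> {1..n}\<close>] by (auto simp: relabel_bot_def)
  qed (use that in \<open>auto simp: relabel_bot_def\<close>)
  have xy_range: "x \<in> {1..2*n}" "y \<in> {1..2*n}"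
    using xy blockrel_subset[OF P] by auto
  then have "(relabel_bot n \<sigma> x, relabel_bot n \<sigma> y) \<in> blockrel (pmult n P (perm_diagram n \<sigma>))"
    using xy relabel_bot_invol by (simp add: blockrel_pmult_perm_right[OF P \<sigma>])
  then have "(relabel_top n \<sigma> (relabel_bot n \<sigma> x), relabel_top n \<sigma> (relabel_bot n \<sigma> y)) \<in> blockrel P"
    unfolding comm blockrel_pmult_perm_left[OF P \<sigma>] by simp
  moreover have "relabel_top n \<sigma> (relabel_bot n \<sigma> z) = conj_act n \<sigma> z" if "z \<in> {1..2*n}" for z
    using relabel_bot_invol[OF that] by (auto simp: relabel_top_def relabel_bot_def conj_act_def)
  ultimately show ?thesis
    using xy_range by simp
qed

section \<open>Partitions coarser than the identity\<close>

definition col :: "nat \<Rightarrow> nat \<Rightarrow> nat" where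
  "col n x = (if x \<le> n then x else x - n)"

definition lift_rel :: "nat \<Rightarrow> (nat \<times> nat) set \<Rightarrow> (nat \<times> nat) set" where
  "lift_rel n \<rho> = {(x, y). x \<in> {1..2*n} \<and> y \<in> {1..2*n} \<and> (col n x, col n y) \<in> \<rho>}"

lemma col_top [simp]: "i \<le> n \<Longrightarrow> col n i = i"
  and col_bot [simp]: "n < x \<Longrightarrow> col n x = x - n"
  and col_range: "x \<in> {1..2*n} \<Longrightarrow> col n x \<in> {1..n}"
  by (auto simp: col_def)

lemma col_cases: "x \<in> {1..2*n} \<Longrightarrow> x \<in> {col n x, n + col n x}"
  by (auto simp: col_def)

lemma lift_relI: "x \<in> {1..2*n} \<Longrightarrow> y \<in> {1..2*n} \<Longrightarrow> (col n x, col n y) \<in> \<rho> \<Longrightarrow> (x, y) \<in> lift_rel n \<rho>"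
  unfolding lift_rel_def by simp

lemma lift_rel_full: "lift_rel n ({1..n} \<times> {1..n}) = {1..2*n} \<times> {1..2*n}"
  using col_range unfolding lift_rel_def by blast

lemma equiv_lift_rel: "equiv {1..n} \<rho> \<Longrightarrow> equiv {1..2*n} (lift_rel n \<rho>)"
  using col_range unfolding lift_rel_def equiv_def refl_on_def sym_def trans_def by blast

lemma blockrel_id_part: "blockrel (id_part n) = lift_rel n (Id_on {1..n})"
proof safe
  fix a b assume "(a, b) \<in> blockrel (id_part n)"
  then obtain i where "i \<in> {1..n}" "a \<in> {i, n + i}" "b \<in> {i, n + i}"
    unfolding blockrel_def id_part_def by auto
  then show "(a, b) \<in> lift_rel n (Id_on {1..n})"
    unfolding lift_rel_def by auto
next
  fix a b assume "(a, b) \<in> lift_rel n (Id_on {1..n})"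
  then have "col n a \<in> {1..n}" "a \<in> {col n a, n + col n a}" "b \<in> {col n a, n + col n a}"
    unfolding lift_rel_def col_def by (auto split: if_splits)
  then show "(a, b) \<in> blockrel (id_part n)"
    unfolding id_part_def by (auto intro: blockrelI)
qed

lemma blockrel_eq_lift_rel:
  assumes J: "partition_on {1..2*n} J" and "blockrel (id_part n) \<subseteq> blockrel J"
  shows "blockrel J = lift_rel n (blockrel J \<inter> {1..n} \<times> {1..n})"
proof -
  have E: "sym (blockrel J)" "trans (blockrel J)"
    using equiv_blockrel[OF J] by (auto elim: equivE)
  have to_col: "(x, col n x) \<in> blockrel J" if "x \<in> {1..2*n}" for x
  proof -
    have "(x, col n x) \<in> lift_rel n (Id_on {1..n})"
      using that col_range[OF that] col_top[of "col n x" n] unfolding lift_rel_def by auto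
    then show ?thesis
      using assms(2) unfolding blockrel_id_part by auto
  qed
  have "(x, y) \<in> blockrel J \<longleftrightarrow> (col n x, col n y) \<in> blockrel J"
    if "x \<in> {1..2*n}" "y \<in> {1..2*n}" for x y
    using to_col[OF that(1)] to_col[OF that(2)] E by (meson symD transD)
  then show ?thesis
    using blockrel_subset[OF J] col_range unfolding lift_rel_def by auto
qed

lemma path_to_col:
  assumes \<rho>: "equiv {1..n} \<rho>" and \<rho>': "equiv {1..n} \<rho>'" and x: "x \<in> {1..2*n}"
  shows "(x, col n x) \<in> (diagram_edges n (lift_rel n \<rho>) (lift_rel n \<rho>'))\<^sup>*"
proof (cases "x \<le> n")
  case False
  let ?R = "diagram_edges n (lift_rel n \<rho>) (lift_rel n \<rho>')"
  define i where "i = x - n"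
  have i: "i \<in> {1..n}" "x = n + i"
    using x False unfolding i_def by auto
  have "(n + i, i) \<in> lift_rel n \<rho>'" "(n + i, i) \<in> lift_rel n \<rho>"
    using i \<rho> \<rho>' by (auto intro!: lift_relI elim!: equivE dest: refl_onD)
  then have "(xtop n (n + i), xtop n i) \<in> ?R" "(xbot n (n + i), xbot n i) \<in> ?R"
    by (auto intro: diagram_edges_topI diagram_edges_botI simp del: xtop_top xtop_bot xbot_top xbot_bot)
  then have "(x, 2 * n + i) \<in> ?R" "(2 * n + i, col n x) \<in> ?R"
    using i by auto
  then show ?thesis
    by (meson converse_rtrancl_into_rtrancl r_into_rtrancl)
qed simp

lemma trancl_union_subset_paths:
  assumes \<rho>: "equiv {1..n} \<rho>" and \<rho>': "equiv {1..n} \<rho>'"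
  shows "(\<rho> \<union> \<rho>')\<^sup>+ \<subseteq> (diagram_edges n (lift_rel n \<rho>) (lift_rel n \<rho>'))\<^sup>*"
proof -
  let ?R = "diagram_edges n (lift_rel n \<rho>) (lift_rel n \<rho>')"
  have steps: "\<rho> \<union> \<rho>' \<subseteq> ?R\<^sup>*"
  proof (rule subrelI)
    fix i j assume "(i, j) \<in> \<rho> \<union> \<rho>'"
    moreover have i: "i \<in> {1..n}" "j \<in> {1..n}"
      using calculation \<rho> \<rho>' by (auto elim!: equivE)
    have refl: "(i, i) \<in> \<rho>" "(j, j) \<in> \<rho>"
      using i \<rho> by (auto elim!: equivE dest: refl_onD)
    consider "(i, j) \<in> \<rho>" | "(i, j) \<in> \<rho>'"
      using calculation by blast
    then show "(i, j) \<in> ?R\<^sup>*"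
    proof cases
      case 1
      then have "(i, j) \<in> lift_rel n \<rho>"
        using i by (auto intro: lift_relI)
      then have "(xbot n i, xbot n j) \<in> ?R"
        by (rule diagram_edges_botI)
      then show ?thesis
        using i by auto
    next
      case 2
      have "(i, n + i) \<in> lift_rel n \<rho>" "(i, j) \<in> lift_rel n \<rho>'" "(n + j, j) \<in> lift_rel n \<rho>"
        using i 2 refl by (auto intro: lift_relI)
      then have "(xbot n i, xbot n (n + i)) \<in> ?R" "(xtop n i, xtop n j) \<in> ?R"
        "(xbot n (n + j), xbot n j) \<in> ?R"
        by (auto intro: diagram_edges_topI diagram_edges_botI simp del: xtop_top xtop_bot xbot_top xbot_bot)
      then have "(i, 2 * n + i) \<in> ?R" "(2 * n + i, 2 * n + j) \<in> ?R" "(2 * n + j, j) \<in> ?R"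
        using i by auto
      then show ?thesis
        by (meson converse_rtrancl_into_rtrancl r_into_rtrancl)
    qed
  qed
  then show ?thesis
    using rtrancl_subset_rtrancl[OF steps] by (auto dest: trancl_into_rtrancl)
qed

lemma compose_rel_lift_rel:
  assumes \<rho>: "equiv {1..n} \<rho>" and \<rho>': "equiv {1..n} \<rho>'"
  shows "compose_rel n (lift_rel n \<rho>) (lift_rel n \<rho>') = lift_rel n ((\<rho> \<union> \<rho>')\<^sup>+)"
proof
  \<comment> \<open>\<open>g\<close> sends every point, including the middle point \<open>x\<^sub>i\<close>, to its column.\<close>
  define g where "g u = (if u \<le> 2*n then col n u else u - 2*n)" for u
  have g_bot: "g (xbot n a) = col n a" and g_top: "g (xtop n a) = col n a" if "a \<in> {1..2*n}" for a
    using that unfolding g_def xbot_def xtop_def col_def by auto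
  have "compose_rel n (lift_rel n \<rho>) (lift_rel n \<rho>') \<subseteq> inv_image ((\<rho> \<union> \<rho>')\<^sup>+) g"
    by (rule compose_rel_subset_inv_image) (auto simp: lift_rel_def g_bot g_top)
  then show "compose_rel n (lift_rel n \<rho>) (lift_rel n \<rho>') \<subseteq> lift_rel n ((\<rho> \<union> \<rho>')\<^sup>+)"
    unfolding compose_rel_def lift_rel_def g_def by auto
  show "lift_rel n ((\<rho> \<union> \<rho>')\<^sup>+) \<subseteq> compose_rel n (lift_rel n \<rho>) (lift_rel n \<rho>')"
  proof (rule subrelI)
    fix x y assume "(x, y) \<in> lift_rel n ((\<rho> \<union> \<rho>')\<^sup>+)"
    then have xy: "x \<in> {1..2*n}" "y \<in> {1..2*n}"
      "(col n x, col n y) \<in> (diagram_edges n (lift_rel n \<rho>) (lift_rel n \<rho>'))\<^sup>*"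
      using trancl_union_subset_paths[OF \<rho> \<rho>'] unfolding lift_rel_def by auto
    show "(x, y) \<in> compose_rel n (lift_rel n \<rho>) (lift_rel n \<rho>')"
      using equiv_lift_rel[OF \<rho>] equiv_lift_rel[OF \<rho>'] xy(1,2)
        path_to_col[OF \<rho> \<rho>' xy(1)] path_to_col[OF \<rho> \<rho>' xy(2)] xy(3)
      by (rule compose_rel_via_paths)
  qed
qed

definition merge_rel :: "nat \<Rightarrow> nat \<Rightarrow> (nat \<times> nat) set" where
  "merge_rel n k = Id_on {1..n} \<union> {k, k + 1} \<times> {k, k + 1}"

lemma equiv_merge_rel: "1 \<le> k \<Longrightarrow> k < n \<Longrightarrow> equiv {1..n} (merge_rel n k)"
  unfolding merge_rel_def by (intro equivI) (auto simp: refl_on_def sym_def trans_def)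

lemma blockrel_bpart_subset:
  assumes "1 \<le> k" "k < n"
  shows "blockrel (bpart n k) \<subseteq> lift_rel n (merge_rel n k)"
proof (rule subrelI)
  fix a b assume "(a, b) \<in> blockrel (bpart n k)"
  then obtain B where B: "B \<in> bpart n k" "a \<in> B" "b \<in> B"
    unfolding blockrel_def by auto
  show "(a, b) \<in> lift_rel n (merge_rel n k)"
  proof (cases "B = {k, n + k, k + 1, n + k + 1}")
    case True
    have "x \<in> {1..2*n} \<and> col n x \<in> {k, k + 1}" if "x \<in> B" for x
      using that assms unfolding True by (elim insertE) auto
    then show ?thesis
      using B(2,3) unfolding merge_rel_def by (intro lift_relI) auto
  next
    case False
    then have "B \<in> id_part n"
      using B(1) unfolding bpart_def by blast
    then obtain i where i: "i \<in> {1..n}" "B = {i, n + i}"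
      unfolding id_part_def by auto
    have "x \<in> {1..2*n} \<and> col n x = i" if "x \<in> B" for x
      using that i unfolding i(2) by (elim insertE) auto
    then show ?thesis
      using B(2,3) i(1) unfolding merge_rel_def by (intro lift_relI) auto
  qed
qed

lemma lift_rel_merge_subset:
  assumes "1 \<le> k" "k < n"
  shows "lift_rel n (merge_rel n k) \<subseteq> blockrel (bpart n k)"
proof (rule subrelI)
  fix a b assume "(a, b) \<in> lift_rel n (merge_rel n k)"
  then have ab: "a \<in> {col n a, n + col n a}" "b \<in> {col n b, n + col n b}"
      "(col n a, col n b) \<in> Id_on {1..n} \<union> {k, k + 1} \<times> {k, k + 1}"
    unfolding lift_rel_def merge_rel_def using col_cases by auto
  show "(a, b) \<in> blockrel (bpart n k)"
  proof (cases "col n a \<in> {k, k + 1}")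
    case True
    then have "col n b \<in> {k, k + 1}"
      using ab(3) by auto
    then have "a \<in> {k, n + k, k + 1, n + k + 1}" "b \<in> {k, n + k, k + 1, n + k + 1}"
      using True ab(1,2) by auto
    moreover have "{k, n + k, k + 1, n + k + 1} \<in> bpart n k"
      unfolding bpart_def by simp
    ultimately show ?thesis
      by (rule blockrelI[rotated])
  next
    case False
    then have "col n b = col n a" "col n a \<in> {1..n}"
      using ab(3) by auto
    have "{col n a, n + col n a} \<noteq> {k, n + k}" "{col n a, n + col n a} \<noteq> {k + 1, n + k + 1}"
      using False \<open>col n a \<in> {1..n}\<close> assms by (auto simp: doubleton_eq_iff)
    moreover have "{col n a, n + col n a} \<in> id_part n"
      using \<open>col n a \<in> {1..n}\<close> unfolding id_part_def by auto
    ultimately have "{col n a, n + col n a} \<in> bpart n k"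
      unfolding bpart_def by blast
    then show ?thesis
      using ab(1,2) \<open>col n b = col n a\<close> by (auto intro: blockrelI)
  qed
qed

lemma blockrel_bpart: "1 \<le> k \<Longrightarrow> k < n \<Longrightarrow> blockrel (bpart n k) = lift_rel n (merge_rel n k)"
  by (intro subset_antisym blockrel_bpart_subset lift_rel_merge_subset)

lemma Union_bpart: "1 \<le> k \<Longrightarrow> k < n \<Longrightarrow> \<Union>(bpart n k) = {1..2*n}"
  unfolding Union_eq_blockrel_diag blockrel_bpart lift_rel_def merge_rel_def using col_range by auto

text \<open>The column relation of the second component of \<open>e\<^sub>k \<cdots> e\<^sub>n\<^sub>-\<^sub>1\<close>.\<close>

definition tail_rel :: "nat \<Rightarrow> nat \<Rightarrow> (nat \<times> nat) set" where
  "tail_rel n k = {(i, j). i \<in> {1..n} \<and> j \<in> {1..n} \<and> (i = j \<or> k \<le> i \<and> k \<le> j)}"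

lemma equiv_tail_rel: "equiv {1..n} (tail_rel n k)"
  unfolding tail_rel_def equiv_def refl_on_def sym_def trans_def by auto

lemma tail_rel_last: "tail_rel n n = Id_on {1..n}"
  unfolding tail_rel_def by auto

lemma tail_rel_first: "tail_rel n 1 = {1..n} \<times> {1..n}"
  unfolding tail_rel_def by auto

lemma tail_rel_merge:
  assumes "1 \<le> k" "k < n"
  shows "(merge_rel n k \<union> tail_rel n (k + 1))\<^sup>+ = tail_rel n k"
proof
  have "merge_rel n k \<union> tail_rel n (k + 1) \<subseteq> tail_rel n k"
    using assms unfolding merge_rel_def tail_rel_def by auto
  then show "(merge_rel n k \<union> tail_rel n (k + 1))\<^sup>+ \<subseteq> tail_rel n k"
    using trancl_id[OF equivE[OF equiv_tail_rel]] trancl_mono_subset by metis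
  show "tail_rel n k \<subseteq> (merge_rel n k \<union> tail_rel n (k + 1))\<^sup>+"
  proof (rule subrelI)
    fix i j assume "(i, j) \<in> tail_rel n k"
    then consider "(i, j) \<in> Id_on {1..n} \<union> tail_rel n (k + 1)"
      | "i = k" "j \<in> {k + 1..n}" | "j = k" "i \<in> {k + 1..n}"
      unfolding tail_rel_def by force
    then show "(i, j) \<in> (merge_rel n k \<union> tail_rel n (k + 1))\<^sup>+"
    proof cases
      case 2
      then have "(k, k + 1) \<in> merge_rel n k" "(k + 1, j) \<in> tail_rel n (k + 1)"
        using assms unfolding merge_rel_def tail_rel_def by auto
      then show ?thesis
        using 2 by (meson UnCI r_into_trancl trancl_into_trancl)
    next
      case 3
      then have "(i, k + 1) \<in> tail_rel n (k + 1)" "(k + 1, k) \<in> merge_rel n k"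
        using assms unfolding merge_rel_def tail_rel_def by auto
      then show ?thesis
        using 3 by (meson UnCI r_into_trancl trancl_into_trancl)
    qed (auto simp: merge_rel_def)
  qed
qed

lemma foldr_egen:
  assumes "1 \<le> k" "k \<le> n"
  shows "foldr (\<lambda>i acc. rmult n (egen n i) acc) [k..<n] (rone n)
    = (id_part n, {1..2*n} // lift_rel n (tail_rel n k))"
  using assms
proof (induction "n - k" arbitrary: k)
  case 0
  then have "k = n" by simp
  then show ?case
    using quotient_blockrel[OF id_part_partition]
    by (simp add: rone_def tail_rel_last blockrel_id_part)
next
  case (Suc m)
  let ?Q = "{1..2*n} // lift_rel n (tail_rel n (k + 1))"
  have k: "1 \<le> k" "k < n"
    using Suc by auto
  have equiv_Q: "equiv {1..2*n} (lift_rel n (tail_rel n (k + 1)))"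
    by (rule equiv_lift_rel[OF equiv_tail_rel])
  have "pmult n (bpart n k) ?Q
      = {1..2*n} // compose_rel n (blockrel (bpart n k)) (blockrel ?Q)"
    using Union_bpart[OF k] Union_partition[OF partition_on_quotient[OF equiv_Q]]
    by (rule pmult_eq_quotient)
  also have "\<dots> = {1..2*n} // lift_rel n (tail_rel n k)"
    unfolding blockrel_bpart[OF k] blockrel_quotient[OF equiv_Q]
      compose_rel_lift_rel[OF equiv_merge_rel[OF k] equiv_tail_rel] tail_rel_merge[OF k] ..
  finally have step: "pmult n (bpart n k) ?Q = {1..2*n} // lift_rel n (tail_rel n k)" .
  have "foldr (\<lambda>i acc. rmult n (egen n i) acc) [k..<n] (rone n)
      = rmult n (egen n k) (foldr (\<lambda>i acc. rmult n (egen n i) acc) [k + 1..<n] (rone n))"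
    using k by (simp add: upt_conv_Cons)
  also have "\<dots> = rmult n (egen n k) (id_part n, ?Q)"
    using Suc k by simp
  also have "\<dots> = (id_part n, {1..2*n} // lift_rel n (tail_rel n k))"
    using step by (simp add: rmult_def egen_def pmult_id_left[OF id_part_partition])
  finally show ?case .
qed

lemma eprod_eq:
  assumes "1 \<le> n"
  shows "eprod n = (id_part n, {{1..2*n}})"
proof -
  have E: "equiv {1..2*n} ({1..2*n} \<times> {1..2*n})"
    using equiv_lift_rel[OF equiv_tail_rel, of n 1] unfolding tail_rel_first lift_rel_full .
  have "{1..2*n} // lift_rel n (tail_rel n 1) = {{1..2*n}}"
    unfolding tail_rel_first lift_rel_full
    using partition_on_quotient[OF E] blockrel_quotient[OF E] assms
    by (intro partition_eq_full) auto
  then show ?thesis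
    using foldr_egen[of 1 n] assms unfolding eprod_def by simp
qed

definition propagating :: "nat \<Rightarrow> (nat \<times> nat) set \<Rightarrow> bool" where
  "propagating n E \<longleftrightarrow> (\<forall>x\<in>{1..2*n}. \<exists>i\<in>{1..n}. \<exists>j\<in>{1..n}. x \<in> {i, n + j} \<and> (i, n + j) \<in> E)"

lemma compose_rel_full_left:
  assumes n: "1 \<le> n" and E: "equiv {1..2*n} E" and through: "propagating n E"
  shows "compose_rel n ({1..2*n} \<times> {1..2*n}) E = {1..2*n} \<times> {1..2*n}"
proof
  let ?R = "diagram_edges n ({1..2*n} \<times> {1..2*n}) E"
  show "compose_rel n ({1..2*n} \<times> {1..2*n}) E \<subseteq> {1..2*n} \<times> {1..2*n}"
    unfolding compose_rel_def by auto
  have hub: "(x, 1) \<in> ?R\<^sup>*" if x: "x \<in> {1..2*n}" for x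
  proof (cases "x \<le> n")
    case True
    have "(xbot n x, xbot n 1) \<in> ?R"
      using x n by (intro diagram_edges_botI) auto
    then show ?thesis
      using True n by auto
  next
    case False
    obtain i j where ij: "i \<in> {1..n}" "j \<in> {1..n}" "x \<in> {i, n + j}" "(i, n + j) \<in> E"
      using through x unfolding propagating_def by blast
    then have "x = n + j"
      using False by auto
    have "(n + j, i) \<in> E"
      using ij(4) E by (auto elim: equivE dest: symD)
    then have "(xtop n (n + j), xtop n i) \<in> ?R" "(xbot n (n + i), xbot n 1) \<in> ?R"
      using ij(1) n by (auto intro: diagram_edges_topI diagram_edges_botI simp del: xtop_top xtop_bot xbot_top xbot_bot)
    then have "(x, 2 * n + i) \<in> ?R" "(2 * n + i, 1) \<in> ?R"
      using \<open>x = n + j\<close> ij(1,2) n by auto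
    then show ?thesis
      by (meson converse_rtrancl_into_rtrancl r_into_rtrancl)
  qed
  show "{1..2*n} \<times> {1..2*n} \<subseteq> compose_rel n ({1..2*n} \<times> {1..2*n}) E"
  proof (rule subrelI)
    fix x y assume "(x, y) \<in> {1..2*n} \<times> {1..2*n}"
    then show "(x, y) \<in> compose_rel n ({1..2*n} \<times> {1..2*n}) E"
      using hub by (intro compose_rel_via_paths[OF equiv_full E, of x y 1 1]) auto
  qed
qed

lemma compose_rel_full_right:
  assumes n: "1 \<le> n" and E: "equiv {1..2*n} E" and through: "propagating n E"
  shows "compose_rel n E ({1..2*n} \<times> {1..2*n}) = {1..2*n} \<times> {1..2*n}"
proof
  let ?R = "diagram_edges n E ({1..2*n} \<times> {1..2*n})"
  show "compose_rel n E ({1..2*n} \<times> {1..2*n}) \<subseteq> {1..2*n} \<times> {1..2*n}"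
    unfolding compose_rel_def by auto
  have hub: "(x, 2 * n) \<in> ?R\<^sup>*" if x: "x \<in> {1..2*n}" for x
  proof (cases "x \<le> n")
    case False
    have "(xtop n x, xtop n (2 * n)) \<in> ?R"
      using x n by (intro diagram_edges_topI) auto
    then show ?thesis
      using False n by auto
  next
    case True
    obtain i j where ij: "i \<in> {1..n}" "j \<in> {1..n}" "x \<in> {i, n + j}" "(i, n + j) \<in> E"
      using through x unfolding propagating_def by blast
    then have "x = i"
      using True by auto
    have "(xbot n i, xbot n (n + j)) \<in> ?R" "(xtop n j, xtop n (2 * n)) \<in> ?R"
      using ij n by (auto intro: diagram_edges_topI diagram_edges_botI simp del: xtop_top xtop_bot xbot_top xbot_bot)
    then have "(x, 2 * n + j) \<in> ?R" "(2 * n + j, 2 * n) \<in> ?R"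
      using \<open>x = i\<close> ij(1,2) n by auto
    then show ?thesis
      by (meson converse_rtrancl_into_rtrancl r_into_rtrancl)
  qed
  show "{1..2*n} \<times> {1..2*n} \<subseteq> compose_rel n E ({1..2*n} \<times> {1..2*n})"
  proof (rule subrelI)
    fix x y assume "(x, y) \<in> {1..2*n} \<times> {1..2*n}"
    then show "(x, y) \<in> compose_rel n E ({1..2*n} \<times> {1..2*n})"
      using hub by (intro compose_rel_via_paths[OF E equiv_full, of x y "2 * n" "2 * n"]) auto
  qed
qed

lemma propagating_mono: "propagating n E \<Longrightarrow> E \<subseteq> F \<Longrightarrow> propagating n F"
  unfolding propagating_def by blast

lemma symgrp_blocks: "I \<in> symgrp n \<Longrightarrow> B \<in> I \<Longrightarrow> \<exists>i\<in>{1..n}. \<exists>j\<in>{1..n}. B = {i, n + j}"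
  unfolding symgrp_def by auto

lemma partition_symgrp: "I \<in> symgrp n \<Longrightarrow> partition_on {1..2*n} I"
  unfolding symgrp_def by auto

lemma symgrp_propagating:
  assumes "I \<in> symgrp n"
  shows "propagating n (blockrel I)"
  unfolding propagating_def
proof
  fix x assume "x \<in> {1..2*n}"
  then obtain B where "B \<in> I" "x \<in> B"
    using partition_onD1[OF partition_symgrp[OF assms]] by blast
  moreover from this obtain i j where "i \<in> {1..n}" "j \<in> {1..n}" "B = {i, n + j}"
    using symgrp_blocks[OF assms] by blast
  moreover from calculation have "(i, n + j) \<in> blockrel I"
    by (auto intro: blockrelI)
  ultimately show "\<exists>i\<in>{1..n}. \<exists>j\<in>{1..n}. x \<in> {i, n + j} \<and> (i, n + j) \<in> blockrel I"
    by blast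
qed

section \<open>Invariance under transpositions\<close>

lemma exists_third:
  assumes "2 < card A"
  obtains c where "c \<in> A" "c \<noteq> x" "c \<noteq> y"
proof -
  have "card {x, y} \<le> 2"
    by (cases "x = y") auto
  then have "\<not> A \<subseteq> {x, y}"
    using assms card_mono[of "{x, y}" A] by auto
  then show ?thesis
    using that by blast
qed

lemma single_valued_transpose_invariant_subset_Id:
  assumes "single_valued T" "T \<subseteq> A \<times> A" "2 < card A"
    and inv: "\<And>a b x y. a \<in> A \<Longrightarrow> b \<in> A \<Longrightarrow> (x, y) \<in> T \<Longrightarrow> (transpose a b x, transpose a b y) \<in> T"
  shows "T \<subseteq> Id"
proof (rule subrelI)
  fix x y assume xy: "(x, y) \<in> T"
  show "(x, y) \<in> Id"
  proof (rule ccontr)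
    assume "(x, y) \<notin> Id"
    obtain c where c: "c \<in> A" "c \<noteq> x" "c \<noteq> y"
      using exists_third[OF assms(3)] .
    have "y \<in> A"
      using xy assms(2) by auto
    from inv[OF this c(1) xy] have "(x, c) \<in> T"
      using \<open>(x, y) \<notin> Id\<close> c by simp
    then show False
      using xy c(3) assms(1) by (auto dest: single_valuedD)
  qed
qed

lemma equiv_transpose_invariant_cases:
  assumes "equiv A \<rho>"
    and inv: "\<And>a b x y. a \<in> A \<Longrightarrow> b \<in> A \<Longrightarrow> (x, y) \<in> \<rho> \<Longrightarrow> (transpose a b x, transpose a b y) \<in> \<rho>"
  shows "\<rho> = Id_on A \<or> \<rho> = A \<times> A"
proof (cases "\<rho> \<subseteq> Id")
  case True
  then show ?thesis
    using assms(1) by (auto elim!: equivE simp: refl_on_def)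
next
  case False
  then obtain i j where ij: "(i, j) \<in> \<rho>" "i \<noteq> j"
    by auto
  have "i \<in> A" "j \<in> A"
    using ij assms(1) by (auto elim: equivE)
  have "(i, k) \<in> \<rho>" if "k \<in> A" for k
  proof -
    consider "k = i" | "k = j" | "k \<noteq> i" "k \<noteq> j" by blast
    then show ?thesis
    proof cases
      case 1
      then show ?thesis using assms(1) \<open>i \<in> A\<close> by (auto elim: equivE dest: refl_onD)
    next
      case 2
      then show ?thesis using ij by simp
    next
      case 3
      then show ?thesis using inv[OF \<open>j \<in> A\<close> that ij(1)] ij(2) by simp
    qed
  qed
  then have "A \<times> A \<subseteq> \<rho>"
    using assms(1) unfolding equiv_def sym_def trans_def by blast
  then show ?thesis
    using assms(1) by (auto elim: equivE)
qed

definition transposition_invariant :: "nat \<Rightarrow> (nat \<times> nat) set \<Rightarrow> bool" where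
  "transposition_invariant n E \<longleftrightarrow> (\<forall>a\<in>{1..n}. \<forall>b\<in>{1..n}. \<forall>(x, y)\<in>E.
     (conj_act n (transpose a b) x, conj_act n (transpose a b) y) \<in> E)"

lemma transpose_in_range: "a \<in> A \<Longrightarrow> b \<in> A \<Longrightarrow> i \<in> A \<Longrightarrow> transpose a b i \<in> A"
  by (simp add: transpose_def)

definition through_graph :: "nat \<Rightarrow> spart \<Rightarrow> (nat \<times> nat) set" where
  "through_graph n I = {(i, j). i \<in> {1..n} \<and> j \<in> {1..n} \<and> (i, n + j) \<in> blockrel I}"

lemma single_valued_through_graph:
  assumes I: "I \<in> symgrp n"
  shows "single_valued (through_graph n I)"
proof (rule single_valuedI)
  fix i j j' assume "(i, j) \<in> through_graph n I" "(i, j') \<in> through_graph n I"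
  then have "(i, n + j) \<in> blockrel I" "(i, n + j') \<in> blockrel I" "j \<ge> 1" "j' \<ge> 1"
    unfolding through_graph_def by auto
  moreover have "sym (blockrel I)" "trans (blockrel I)"
    using equiv_blockrel[OF partition_symgrp[OF I]] by (auto elim: equivE)
  ultimately have "(n + j, n + j') \<in> blockrel I"
    by (meson symD transD)
  then obtain B where "B \<in> I" "n + j \<in> B" "n + j' \<in> B"
    unfolding blockrel_def by auto
  then show "j = j'"
    using symgrp_blocks[OF I \<open>B \<in> I\<close>] \<open>j \<ge> 1\<close> \<open>j' \<ge> 1\<close> by force
qed

lemma symgrp_transposition_invariant_eq_id:
  assumes n: "3 \<le> n" and I: "I \<in> symgrp n" and inv: "transposition_invariant n (blockrel I)"
  shows "I = id_part n"
proof -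
  have "(transpose a b i, transpose a b j) \<in> through_graph n I"
    if ab: "a \<in> {1..n}" "b \<in> {1..n}" and ij: "(i, j) \<in> through_graph n I" for a b i j
  proof -
    have "i \<in> {1..n}" "j \<in> {1..n}" "(i, n + j) \<in> blockrel I"
      using ij unfolding through_graph_def by auto
    moreover from this have "(conj_act n (transpose a b) i, conj_act n (transpose a b) (n + j)) \<in> blockrel I"
      using inv ab unfolding transposition_invariant_def by blast
    ultimately show ?thesis
      using transpose_in_range[OF ab] unfolding through_graph_def by simp
  qed
  then have graph_Id: "through_graph n I \<subseteq> Id"
    using n single_valued_through_graph[OF I]
    by (intro single_valued_transpose_invariant_subset_Id[of _ "{1..n}"]) (auto simp: through_graph_def)
  have "I \<subseteq> id_part n"
  proof
    fix B assume "B \<in> I"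
    then obtain i j where ij: "i \<in> {1..n}" "j \<in> {1..n}" "B = {i, n + j}"
      using symgrp_blocks[OF I] by blast
    then have "(i, j) \<in> through_graph n I"
      unfolding through_graph_def using \<open>B \<in> I\<close> by (auto intro: blockrelI)
    then show "B \<in> id_part n"
      using ij graph_Id unfolding id_part_def by auto
  qed
  then show ?thesis
    using partition_subset_eq[OF partition_symgrp[OF I] id_part_partition] by blast
qed

lemma coarser_id_transposition_invariant_cases:
  assumes n: "1 \<le> n" and J: "partition_on {1..2*n} J" and "refines (id_part n) J"
    and inv: "transposition_invariant n (blockrel J)"
  shows "J = id_part n \<or> J = {{1..2*n}}"
proof -
  let ?\<rho> = "blockrel J \<inter> {1..n} \<times> {1..n}"
  have lift: "blockrel J = lift_rel n ?\<rho>"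
    using blockrel_eq_lift_rel[OF J] blockrel_subset_refines[OF assms(3) id_part_partition J] .
  have "equiv {1..n} ?\<rho>"
    using equiv_Restr[OF equiv_blockrel[OF J]] by auto
  moreover have "(transpose a b i, transpose a b j) \<in> ?\<rho>"
    if ab: "a \<in> {1..n}" "b \<in> {1..n}" and ij: "(i, j) \<in> ?\<rho>" for a b i j
  proof -
    have "(conj_act n (transpose a b) i, conj_act n (transpose a b) j) \<in> blockrel J"
      using inv ab ij unfolding transposition_invariant_def by blast
    then show ?thesis
      using ij transpose_in_range[OF ab] by auto
  qed
  ultimately have "?\<rho> = Id_on {1..n} \<or> ?\<rho> = {1..n} \<times> {1..n}"
    by (rule equiv_transpose_invariant_cases)
  then show ?thesis
  proof
    assume "?\<rho> = Id_on {1..n}"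
    then have "blockrel J = blockrel (id_part n)"
      using lift blockrel_id_part by simp
    then show ?thesis
      using partition_eqI[OF J id_part_partition] by simp
  next
    assume "?\<rho> = {1..n} \<times> {1..n}"
    then have "blockrel J = {1..2*n} \<times> {1..2*n}"
      using lift lift_rel_full by simp
    then show ?thesis
      using partition_eq_full[OF J] n by simp
  qed
qed

lemma refines_self: "refines P P"
  unfolding refines_def
proof
  fix B assume "B \<in> P"
  then show "\<exists>S\<subseteq>P. B = \<Union>S"
    by (intro exI[of _ "{B}"]) auto
qed

lemma ramifiedD:
  assumes "(I, K) \<in> ramified n (symgrp n)"
  shows "I \<in> symgrp n" "partition_on {1..2*n} I" "partition_on {1..2*n} K" "refines I K"
  using assms partition_symgrp unfolding ramified_def by auto

lemma perm_diagram_symgrp: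
  assumes "invol n \<sigma>"
  shows "perm_diagram n \<sigma> \<in> symgrp n"
  using partition_perm_diagram[OF assms] involD[OF assms]
  unfolding symgrp_def perm_diagram_def by blast

lemma perm_diagram_ramified:
  "invol n \<sigma> \<Longrightarrow> (perm_diagram n \<sigma>, perm_diagram n \<sigma>) \<in> ramified n (symgrp n)"
  unfolding ramified_def
  using perm_diagram_symgrp partition_perm_diagram refines_self by blast

lemma rone_center: "rone n \<in> center n (ramified n (symgrp n))"
proof -
  have "rmult n (rone n) x = rmult n x (rone n)" if "x \<in> ramified n (symgrp n)" for x
    using that ramifiedD[of "fst x" "snd x" n]
    by (simp add: rmult_def rone_def pmult_id_left pmult_id_right)
  moreover have "rone n \<in> ramified n (symgrp n)"
    using perm_diagram_ramified[OF invol_id] by (simp add: rone_def perm_diagram_id)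
  ultimately show ?thesis
    unfolding center_def by blast
qed

lemma pmult_full_absorbs:
  assumes n: "1 \<le> n" and IK: "(I, K) \<in> ramified n (symgrp n)"
  shows "pmult n {{1..2*n}} K = {{1..2*n}}" "pmult n K {{1..2*n}} = {{1..2*n}}"
proof -
  note parts = ramifiedD[OF IK]
  have E: "equiv {1..2*n} (blockrel K)"
    by (rule equiv_blockrel[OF parts(3)])
  have through: "propagating n (blockrel K)"
    using symgrp_propagating[OF parts(1)] blockrel_subset_refines[OF parts(4,2,3)]
    by (rule propagating_mono)
  have U: "\<Union>{{1..2*n}} = {1..2*n}" "\<Union>K = {1..2*n}"
    using Union_partition[OF parts(3)] by auto
  have full: "blockrel {{1..2*n}} = {1..2*n} \<times> {1..2*n}"
    by (auto simp: blockrel_def)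
  have ne: "{1..2*n} \<noteq> {}"
    using n by simp
  show "pmult n {{1..2*n}} K = {{1..2*n}}"
  proof (rule partition_eq_full[OF partition_pmult[OF U] _ ne])
    show "blockrel (pmult n {{1..2*n}} K) = {1..2*n} \<times> {1..2*n}"
      unfolding blockrel_pmult[OF U] full by (rule compose_rel_full_left[OF n E through])
  qed
  show "pmult n K {{1..2*n}} = {{1..2*n}}"
  proof (rule partition_eq_full[OF partition_pmult[OF U(2,1)] _ ne])
    show "blockrel (pmult n K {{1..2*n}}) = {1..2*n} \<times> {1..2*n}"
      unfolding blockrel_pmult[OF U(2,1)] full by (rule compose_rel_full_right[OF n E through])
  qed
qed

lemma full_diagram_center:
  assumes n: "1 \<le> n"
  shows "(id_part n, {{1..2*n}}) \<in> center n (ramified n (symgrp n))"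
proof -
  have "rmult n (id_part n, {{1..2*n}}) (I, K) = rmult n (I, K) (id_part n, {{1..2*n}})"
    if "(I, K) \<in> ramified n (symgrp n)" for I K
    using pmult_full_absorbs[OF n that] ramifiedD(2)[OF that]
    by (simp add: rmult_def pmult_id_left pmult_id_right)
  moreover have "refines (id_part n) {{1..2*n}}"
    unfolding refines_def using Union_partition[OF id_part_partition, of n] by blast
  then have "(id_part n, {{1..2*n}}) \<in> ramified n (symgrp n)"
    using perm_diagram_symgrp[OF invol_id] partition_on_space[of "{1..2*n}"] n
    unfolding ramified_def perm_diagram_id by auto
  ultimately show ?thesis
    unfolding center_def by auto
qed

lemma mem_center_cases:
  assumes n: "3 \<le> n" and z: "(I, J) \<in> center n (ramified n (symgrp n))"
  shows "I = id_part n \<and> (J = id_part n \<or> J = {{1..2*n}})"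
proof -
  have IJ: "(I, J) \<in> ramified n (symgrp n)"
    using z unfolding center_def by auto
  note parts = ramifiedD[OF IJ]
  have comm: "pmult n P (perm_diagram n (transpose a b)) = pmult n (perm_diagram n (transpose a b)) P"
    if "P \<in> {I, J}" "a \<in> {1..n}" "b \<in> {1..n}" for P a b
    using z perm_diagram_ramified[OF invol_transpose[OF that(2,3)]] that(1)
    unfolding center_def rmult_def by auto
  have inv: "transposition_invariant n (blockrel P)" if "P \<in> {I, J}" for P
    using commute_perm_diagram_invariant[OF _ invol_transpose comm[OF that]] parts(2,3) that
    unfolding transposition_invariant_def by blast
  have "I = id_part n"
    using symgrp_transposition_invariant_eq_id[OF n parts(1) inv] by simp
  moreover have "J = id_part n \<or> J = {{1..2*n}}"
    using coarser_id_transposition_invariant_cases[OF _ parts(3) _ inv] n parts(4) calculation by simp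
  ultimately show ?thesis ..
qed

theorem proposition3p4:
  fixes n :: nat
  assumes "n \<ge> 3"
  shows "center n (ramified n (symgrp n)) = {rone n, eprod n}"
proof
  show "center n (ramified n (symgrp n)) \<subseteq> {rone n, eprod n}"
  proof
    fix z assume z: "z \<in> center n (ramified n (symgrp n))"
    obtain I J where "z = (I, J)"
      by fastforce
    then show "z \<in> {rone n, eprod n}"
      using mem_center_cases[OF assms] z eprod_eq[of n] assms by (auto simp: rone_def)
  qed
  show "{rone n, eprod n} \<subseteq> center n (ramified n (symgrp n))"
    using rone_center full_diagram_center[of n] eprod_eq[of n] assms by simp
qed

end
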